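(* Let $x_0\in\mathbb{R}\cup\{+\infty\}$, $T<x_0$, $I:=[T,x_0)$, let $\phi_1,\phi_2\in C^1(I)$ with $\phi_2(x)=o(\phi_1(x))$ as $x\to x_0$, $\phi_1(x)\neq0$, $\phi_2(x)\neq0$ and $W(\phi_1,\phi_2;x)\neq0$ for all $x\in I$, and let $f$ be absolutely continuous on every compact subinterval of $I$. Assume moreover $$\phi_2'(x)=o(\phi_1'(x)),\qquad \frac{\phi_1'(x)}{\phi_1(x)}=O\Big(\frac{\phi_2'(x)}{\phi_2(x)}\Big)\qquad(x\to x_0).$$ If, for real $a_1,a_2$, $$f(x)=a_1\phi_1(x)+a_2\phi_2(x)+o(\phi_2(x)),\qquad \Big(\frac{f(x)}{\phi_1(x)}\Big)'=a_2\Big(\frac{\phi_2(x)}{\phi_1(x)}\Big)'+o\Big(\Big(\frac{\phi_2(x)}{\phi_1(x)}\Big)'\Big)\qquad(x\to x_0),$$ then $f'(x)=a_1\phi_1'(x)+a_2\phi_2'(x)+o(\phi_2'(x))$ as $x\to x_0$ (together with $f(x)=a_1\phi_1(x)+a_2\phi_2(x)+o(\phi_2(x))$).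
   Context: Limits and $O,o$ relations as $x\to x_0$ are taken for $x<x_0$, over points where the functions are defined (e.g. where $f$ is differentiable). $W(g,h;x):=g(x)h'(x)-g'(x)h(x)$. *)

theory Defs
  imports "HOL-Analysis.Analysis" "HOL-Library.Landau_Symbols"
begin

definition abs_continuous_on :: "real set \<Rightarrow> (real \<Rightarrow> real) \<Rightarrow> bool" where
  "abs_continuous_on S f \<longleftrightarrow>
     (\<forall>e>0. \<exists>d>0. \<forall>(n::nat) (a::nat \<Rightarrow> real) b.
        (\<forall>k<n. a k \<le> b k \<and> {a k..b k} \<subseteq> S) \<and>
        (\<forall>i<n. \<forall>j<n. i \<noteq> j \<longrightarrow> b i \<le> a j \<or> b j \<le> a i) \<and>
        (\<Sum>k<n. b k - a k) < d
        \<longrightarrow> (\<Sum>k<n. \<bar>f (b k) - f (a k)\<bar>) < e)"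

definition approach_from_left :: "ereal \<Rightarrow> real filter" where
  "approach_from_left x0 = (if x0 = \<infinity> then at_top else at_left (real_of_ereal x0))"

definition wronskian :: "(real \<Rightarrow> real) \<Rightarrow> (real \<Rightarrow> real) \<Rightarrow> (real \<Rightarrow> real) \<Rightarrow> (real \<Rightarrow> real) \<Rightarrow> real \<Rightarrow> real" where
  "wronskian g g' h h' x = g x * h' x - g' x * h x"

end

theory Submission
  imports Defs
begin

text \<open>Write \<open>f = (f/\<phi>\<^sub>1) \<phi>\<^sub>1\<close>, so that
  \<open>f' - a\<^sub>1\<phi>\<^sub>1' - a\<^sub>2\<phi>\<^sub>2' = ((f/\<phi>\<^sub>1)' - a\<^sub>2(\<phi>\<^sub>2/\<phi>\<^sub>1)') \<phi>\<^sub>1 + (f - a\<^sub>1\<phi>\<^sub>1 - a\<^sub>2\<phi>\<^sub>2) \<phi>\<^sub>1'/\<phi>\<^sub>1\<close>.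
  The second summand is \<open>o(\<phi>\<^sub>2 \<cdot> \<phi>\<^sub>2'/\<phi>\<^sub>2) = o(\<phi>\<^sub>2')\<close> because \<open>\<phi>\<^sub>1'/\<phi>\<^sub>1 = O(\<phi>\<^sub>2'/\<phi>\<^sub>2)\<close>.
  The first is \<open>o((\<phi>\<^sub>2/\<phi>\<^sub>1)' \<phi>\<^sub>1)\<close>, and \<open>(\<phi>\<^sub>2/\<phi>\<^sub>1)' \<phi>\<^sub>1 = \<phi>\<^sub>2' - \<phi>\<^sub>2 \<phi>\<^sub>1'/\<phi>\<^sub>1 = O(\<phi>\<^sub>2')\<close>
  by the same bound.\<close>

lemma deriv_divide_mult_eq:
  fixes f g :: "real \<Rightarrow> real"
  assumes "(f has_real_derivative f') (at x)" "(g has_real_derivative g') (at x)" "g x \<noteq> 0"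
  shows "deriv (\<lambda>y. f y / g y) x * g x = f' - f x * (g' / g x)"
proof -
  have "deriv (\<lambda>y. f y / g y) x = (f' * g x - f x * g') / (g x * g x)"
    using DERIV_divide[OF assms] by (rule DERIV_imp_deriv)
  with \<open>g x \<noteq> 0\<close> show ?thesis
    by (simp add: field_simps)
qed

lemma smallo_deriv_of_smallo_deriv_divide:
  fixes G :: "real filter" and a1 a2 :: real and f f' \<phi>1 \<phi>1' \<phi>2 \<phi>2' :: "real \<Rightarrow> real"
  assumes deriv_ev: "eventually (\<lambda>x. (f has_real_derivative f' x) (at x)
                        \<and> (\<phi>1 has_real_derivative \<phi>1' x) (at x)
                        \<and> (\<phi>2 has_real_derivative \<phi>2' x) (at x)
                        \<and> \<phi>1 x \<noteq> 0 \<and> \<phi>2 x \<noteq> 0) G"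
    and bigO: "(\<lambda>x. \<phi>1' x / \<phi>1 x) \<in> O[G](\<lambda>x. \<phi>2' x / \<phi>2 x)"
    and asym: "(\<lambda>x. f x - a1 * \<phi>1 x - a2 * \<phi>2 x) \<in> o[G](\<phi>2)"
    and asym_d: "(\<lambda>x. deriv (\<lambda>y. f y / \<phi>1 y) x - a2 * deriv (\<lambda>y. \<phi>2 y / \<phi>1 y) x)
                   \<in> o[G](\<lambda>x. deriv (\<lambda>y. \<phi>2 y / \<phi>1 y) x)"
  shows "(\<lambda>x. f' x - a1 * \<phi>1' x - a2 * \<phi>2' x) \<in> o[G](\<phi>2')"
proof -
  define u where "u x = deriv (\<lambda>y. \<phi>2 y / \<phi>1 y) x" for x
  define \<rho> where "\<rho> x = f x - a1 * \<phi>1 x - a2 * \<phi>2 x" for x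
  define \<sigma> where "\<sigma> x = deriv (\<lambda>y. f y / \<phi>1 y) x - a2 * u x" for x
  have u_mult: "eventually (\<lambda>x. u x * \<phi>1 x = \<phi>2' x - \<phi>2 x * (\<phi>1' x / \<phi>1 x)) G"
    using deriv_ev unfolding u_def by eventually_elim (blast intro: deriv_divide_mult_eq)
  have cancel: "eventually (\<lambda>x. \<phi>2 x * (\<phi>2' x / \<phi>2 x) = \<phi>2' x) G"
    using deriv_ev by eventually_elim simp
  have decomp: "eventually (\<lambda>x. f' x - a1 * \<phi>1' x - a2 * \<phi>2' x
                   = \<sigma> x * \<phi>1 x + \<rho> x * (\<phi>1' x / \<phi>1 x)) G"
    using deriv_ev u_mult
  proof eventually_elim
    case (elim x)
    then have f_quot: "deriv (\<lambda>y. f y / \<phi>1 y) x * \<phi>1 x = f' x - f x * (\<phi>1' x / \<phi>1 x)"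
      by (blast intro: deriv_divide_mult_eq)
    have "\<sigma> x * \<phi>1 x = deriv (\<lambda>y. f y / \<phi>1 y) x * \<phi>1 x - a2 * (u x * \<phi>1 x)"
      unfolding \<sigma>_def by (simp add: algebra_simps)
    also have "\<dots> = (f' x - f x * (\<phi>1' x / \<phi>1 x)) - a2 * (\<phi>2' x - \<phi>2 x * (\<phi>1' x / \<phi>1 x))"
      unfolding f_quot elim(2) ..
    finally have \<sigma>_eq: "\<sigma> x * \<phi>1 x = \<dots>" .
    show ?case
      using elim(1) unfolding \<sigma>_eq \<rho>_def by (simp add: field_simps)
  qed
  have "(\<lambda>x. \<phi>2 x * (\<phi>1' x / \<phi>1 x)) \<in> O[G](\<lambda>x. \<phi>2 x * (\<phi>2' x / \<phi>2 x))"
    by (rule landau_o.big.mult_left[OF bigO])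
  hence ratio_term: "(\<lambda>x. \<phi>2 x * (\<phi>1' x / \<phi>1 x)) \<in> O[G](\<phi>2')"
    unfolding landau_o.big.cong[OF cancel] .
  have "(\<lambda>x. \<phi>2' x - \<phi>2 x * (\<phi>1' x / \<phi>1 x)) \<in> O[G](\<phi>2')"
    by (rule sum_in_bigo(2)[OF landau_o.big_refl ratio_term])
  hence "(\<lambda>x. u x * \<phi>1 x) \<in> O[G](\<phi>2')"
    unfolding landau_o.big.in_cong[OF u_mult] .
  moreover have "(\<lambda>x. \<sigma> x * \<phi>1 x) \<in> o[G](\<lambda>x. u x * \<phi>1 x)"
    unfolding \<sigma>_def u_def by (rule landau_o.small.mult_right[OF asym_d])
  ultimately have "(\<lambda>x. \<sigma> x * \<phi>1 x) \<in> o[G](\<phi>2')"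
    by (rule landau_o.small_big_trans[rotated])
  moreover have "(\<lambda>x. \<rho> x * (\<phi>1' x / \<phi>1 x)) \<in> o[G](\<lambda>x. \<phi>2 x * (\<phi>2' x / \<phi>2 x))"
    unfolding \<rho>_def by (rule landau_o.small_big_mult[OF asym bigO])
  hence "(\<lambda>x. \<rho> x * (\<phi>1' x / \<phi>1 x)) \<in> o[G](\<phi>2')"
    unfolding landau_o.small.cong[OF cancel] .
  ultimately have "(\<lambda>x. \<sigma> x * \<phi>1 x + \<rho> x * (\<phi>1' x / \<phi>1 x)) \<in> o[G](\<phi>2')"
    by (rule sum_in_smallo(1))
  then show ?thesis
    unfolding landau_o.small.in_cong[OF decomp] .
qed

lemma eventually_in_interior_approach_from_left:
  assumes "ereal T < x0"
  shows "eventually (\<lambda>x. x \<in> interior {x. T \<le> x \<and> ereal x < x0}) (approach_from_left x0)"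
proof (cases x0)
  case (real c)
  have sub: "{T<..<c} \<subseteq> interior {x. T \<le> x \<and> ereal x < x0}"
    using real by (intro interior_maximal) auto
  have "eventually (\<lambda>x. x \<in> {T<..<c}) (at_left c)"
    using assms real by (intro eventually_at_left_real) simp
  then have "eventually (\<lambda>x. x \<in> interior {x. T \<le> x \<and> ereal x < x0}) (at_left c)"
    by (rule eventually_mono) (use sub in blast)
  then show ?thesis
    using real by (simp add: approach_from_left_def)
next
  case PInf
  have sub: "{T<..} \<subseteq> interior {x. T \<le> x \<and> ereal x < x0}"
    using PInf by (intro interior_maximal) auto
  have "eventually (\<lambda>x. x \<in> interior {x. T \<le> x \<and> ereal x < x0}) at_top"
    using eventually_gt_at_top[of T] by (rule eventually_mono) (use sub in blast)
  then show ?thesis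
    using PInf by (simp add: approach_from_left_def)
qed (use assms in simp)

theorem proposition9p2:
  fixes x0 :: ereal and T a1 a2 :: real
    and \<phi>1 \<phi>1' \<phi>2 \<phi>2' f :: "real \<Rightarrow> real"
  defines "I \<equiv> {x. T \<le> x \<and> ereal x < x0}"
  defines "F \<equiv> approach_from_left x0"
  defines "D \<equiv> {x. f differentiable (at x)}"
  assumes Tx0: "ereal T < x0"
    and d1: "\<And>x. x \<in> I \<Longrightarrow> (\<phi>1 has_real_derivative \<phi>1' x) (at x within I)"
    and c1: "continuous_on I \<phi>1'"
    and d2: "\<And>x. x \<in> I \<Longrightarrow> (\<phi>2 has_real_derivative \<phi>2' x) (at x within I)"
    and c2: "continuous_on I \<phi>2'"
    and small: "\<phi>2 \<in> o[F](\<phi>1)"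
    and nz1: "\<And>x. x \<in> I \<Longrightarrow> \<phi>1 x \<noteq> 0"
    and nz2: "\<And>x. x \<in> I \<Longrightarrow> \<phi>2 x \<noteq> 0"
    and nzW: "\<And>x. x \<in> I \<Longrightarrow> wronskian \<phi>1 \<phi>1' \<phi>2 \<phi>2' x \<noteq> 0"
    and ac: "\<And>a b. {a..b} \<subseteq> I \<Longrightarrow> abs_continuous_on {a..b} f"
    and small': "\<phi>2' \<in> o[F](\<phi>1')"
    and bigO: "(\<lambda>x. \<phi>1' x / \<phi>1 x) \<in> O[F](\<lambda>x. \<phi>2' x / \<phi>2 x)"
    and asym: "(\<lambda>x. f x - a1 * \<phi>1 x - a2 * \<phi>2 x) \<in> o[F](\<phi>2)"
    and asym_d: "(\<lambda>x. deriv (\<lambda>y. f y / \<phi>1 y) x - a2 * deriv (\<lambda>y. \<phi>2 y / \<phi>1 y) x)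
                   \<in> o[inf F (principal D)](\<lambda>x. deriv (\<lambda>y. \<phi>2 y / \<phi>1 y) x)"
  shows "(\<lambda>x. deriv f x - a1 * \<phi>1' x - a2 * \<phi>2' x) \<in> o[inf F (principal D)](\<phi>2')
         \<and> (\<lambda>x. f x - a1 * \<phi>1 x - a2 * \<phi>2 x) \<in> o[F](\<phi>2)"
proof -
  \<comment> \<open>Only the non-vanishing of \<open>\<phi>\<^sub>1, \<phi>\<^sub>2\<close>, the bound on \<open>\<phi>\<^sub>1'/\<phi>\<^sub>1\<close> and the two expansions
     are needed; the remaining hypotheses belong to the setting of the paper.\<close>
  let ?G = "inf F (principal D)"
  have "eventually (\<lambda>x. x \<in> interior I) F"
    unfolding I_def F_def by (rule eventually_in_interior_approach_from_left[OF Tx0])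
  hence deriv_ev: "eventually (\<lambda>x. (f has_real_derivative deriv f x) (at x)
            \<and> (\<phi>1 has_real_derivative \<phi>1' x) (at x)
            \<and> (\<phi>2 has_real_derivative \<phi>2' x) (at x)
            \<and> \<phi>1 x \<noteq> 0 \<and> \<phi>2 x \<noteq> 0) ?G"
    unfolding eventually_inf_principal
  proof eventually_elim
    case (elim x)
    have x_in: "x \<in> I" and at_eq: "at x within I = at x"
      using elim interior_subset at_within_interior by blast+
    show ?case
      using d1[OF x_in] d2[OF x_in] nz1[OF x_in] nz2[OF x_in] unfolding at_eq
      by (simp add: D_def DERIV_deriv_iff_real_differentiable)
  qed
  have "?G \<le> F" by simp
  have "(\<lambda>x. deriv f x - a1 * \<phi>1' x - a2 * \<phi>2' x) \<in> o[?G](\<phi>2')"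
  proof (rule smallo_deriv_of_smallo_deriv_divide[OF deriv_ev _ _ asym_d])
    show "(\<lambda>x. \<phi>1' x / \<phi>1 x) \<in> O[?G](\<lambda>x. \<phi>2' x / \<phi>2 x)"
      by (rule landau_o.big.filter_mono[OF \<open>?G \<le> F\<close> bigO])
    show "(\<lambda>x. f x - a1 * \<phi>1 x - a2 * \<phi>2 x) \<in> o[?G](\<phi>2)"
      by (rule landau_o.small.filter_mono[OF \<open>?G \<le> F\<close> asym])
  qed
  then show ?thesis using asym ..
qed

end
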